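(* Consider $\dot x=f(x,p)$ with $x\in\mathcal{D}\subset\mathbb{R}^n$, $p\in\mathcal{P}\subset\mathbb{R}^m$, satisfying assumptions A1–A4 below. Then for all $p_1,p_2\in\mathcal{P}$ with $p_1\succeq p_2$, $$\mathcal{B}(x^\ast(p_1))\subseteq\mathcal{B}(x^\ast(p_2)),\qquad \mathcal{B}(x^\bullet(p_1))\supseteq\mathcal{B}(x^\bullet(p_2)).$$ In particular, for all $p\in\mathcal{P}$, $$\mathcal{B}(x^\ast(p_{\min}))\subseteq\mathcal{B}(x^\ast(p))\subseteq\mathcal{B}(x^\ast(p_{\max})),\qquad \mathcal{B}(x^\bullet(p_{\min}))\supseteq\mathcal{B}(x^\bullet(p))\supseteq\mathcal{B}(x^\bullet(p_{\max})).$$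
   Context: The orders are standard: $x\succeq y$ iff $x-y\in\mathbb{R}^n_{\ge0}$ (similarly in $\mathbb{R}^m$), $x\gg y$ iff all components of $x-y$ are positive. $f$ is continuous in $(x,p)$ and locally Lipschitz in $x$; $\phi(t,x_0,p)$ denotes the solution with initial state $x_0$ and parameter $p$. $\mathcal{B}(x^\ast(p))$ denotes the basin of attraction of the equilibrium $x^\ast(p)$ for the system with parameter $p$ (the set of initial conditions in $\mathcal{D}$ whose solutions converge to it). The system is monotone in $x$ and $p$ if $\phi(t,x,p)\preceq\phi(t,y,q)$ for all $t\ge0$, all $x\preceq y$ in $\mathcal{D}$ and all $p\preceq q$ in $\mathcal{P}$. Bistability on $\mathcal{D}$ for a given $p$ means: $\mathcal{D}$ is forward invariant, the system has exactly two asymptotically stable equilibria $x^\ast(p),x^\bullet(p)$ in $\mathcal{D}$, solutions starting in $\mathcal{D}$ that do not converge to one of them start in the common boundary of the two basins, and $\mathrm{cl}(\mathcal{B}(x^\bullet(p)))=\mathrm{cl}(\mathcal{D}\setminus\mathcal{B}(x^\ast(p)))$. Assumptions: (A1) for every $p\in\mathcal{P}$ the system is bistable on $\mathcal{D}$ with stable equilibria $x^\ast(p)$, $x^\bullet(p)$, and the system is monotone in $x$ and $p$. (A2) $\mathcal{P}$ is compact and contains $p_{\min},p_{\max}$ with $p_{\min}\preceq p\preceq p_{\max}$ for all $p\in\mathcal{P}$. (A3) for all $p\in\mathcal{P}$: $x^\ast(p)\in\bigcap_{q\in\mathcal{P}}\mathcal{B}(x^\ast(q))$ and $x^\bullet(p)\in\bigcap_{q\in\mathcal{P}}\mathcal{B}(x^\bullet(q))$.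 (A4) $x^\bullet(p_{\min})\gg x^\ast(p_{\max})$. *)

theory Defs
  imports "HOL-Analysis.Analysis"
begin

text \<open>The order x \<preceq> y is the componentwise order \<le> on vec (library).\<close>

definition strongly_less :: "real^'n \<Rightarrow> real^'n \<Rightarrow> bool" where
  "strongly_less x y \<longleftrightarrow> (\<forall>i. x $ i < y $ i)"

definition is_flow ::
  "(real^'n \<Rightarrow> real^'m \<Rightarrow> real^'n) \<Rightarrow> (real \<Rightarrow> real^'n \<Rightarrow> real^'m \<Rightarrow> real^'n)
   \<Rightarrow> (real^'n) set \<Rightarrow> (real^'m) set \<Rightarrow> bool" where
  "is_flow f phi D P \<longleftrightarrow>
     (\<forall>x0\<in>D. \<forall>p\<in>P. phi 0 x0 p = x0 \<and>
        (\<forall>t\<ge>0. ((\<lambda>s. phi s x0 p) has_vector_derivative f (phi t x0 p) p) (at t within {0..})))"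

definition basin ::
  "(real \<Rightarrow> real^'n \<Rightarrow> real^'m \<Rightarrow> real^'n) \<Rightarrow> (real^'n) set \<Rightarrow> real^'m \<Rightarrow> real^'n \<Rightarrow> (real^'n) set" where
  "basin phi D p xe = {x0 \<in> D. ((\<lambda>t. phi t x0 p) \<longlongrightarrow> xe) at_top}"

definition equilibrium :: "(real^'n \<Rightarrow> real^'m \<Rightarrow> real^'n) \<Rightarrow> real^'m \<Rightarrow> real^'n \<Rightarrow> bool" where
  "equilibrium f p xe \<longleftrightarrow> f xe p = 0"

definition asymp_stable ::
  "(real^'n \<Rightarrow> real^'m \<Rightarrow> real^'n) \<Rightarrow> (real \<Rightarrow> real^'n \<Rightarrow> real^'m \<Rightarrow> real^'n)
   \<Rightarrow> (real^'n) set \<Rightarrow> real^'m \<Rightarrow> real^'n \<Rightarrow> bool" where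
  "asymp_stable f phi D p xe \<longleftrightarrow>
     equilibrium f p xe \<and>
     (\<forall>e>0. \<exists>d>0. \<forall>x0\<in>D. dist x0 xe < d \<longrightarrow> (\<forall>t\<ge>0. dist (phi t x0 p) xe < e)) \<and>
     (\<exists>d>0. \<forall>x0\<in>D. dist x0 xe < d \<longrightarrow> ((\<lambda>t. phi t x0 p) \<longlongrightarrow> xe) at_top)"

definition forward_invariant ::
  "(real \<Rightarrow> real^'n \<Rightarrow> real^'m \<Rightarrow> real^'n) \<Rightarrow> (real^'n) set \<Rightarrow> real^'m \<Rightarrow> bool" where
  "forward_invariant phi D p \<longleftrightarrow> (\<forall>x0\<in>D. \<forall>t\<ge>0. phi t x0 p \<in> D)"

definition bistable ::
  "(real^'n \<Rightarrow> real^'m \<Rightarrow> real^'n) \<Rightarrow> (real \<Rightarrow> real^'n \<Rightarrow> real^'m \<Rightarrow> real^'n)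
   \<Rightarrow> (real^'n) set \<Rightarrow> real^'m \<Rightarrow> real^'n \<Rightarrow> real^'n \<Rightarrow> bool" where
  "bistable f phi D p xs xb \<longleftrightarrow>
     forward_invariant phi D p \<and>
     xs \<noteq> xb \<and>
     {xe \<in> D. asymp_stable f phi D p xe} = {xs, xb} \<and>
     (\<forall>x0\<in>D. x0 \<notin> basin phi D p xs \<and> x0 \<notin> basin phi D p xb \<longrightarrow>
        x0 \<in> frontier (basin phi D p xs) \<inter> frontier (basin phi D p xb)) \<and>
     closure (basin phi D p xb) = closure (D - basin phi D p xs)"

definition monotone_system ::
  "(real \<Rightarrow> real^'n \<Rightarrow> real^'m \<Rightarrow> real^'n) \<Rightarrow> (real^'n) set \<Rightarrow> (real^'m) set \<Rightarrow> bool" where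
  "monotone_system phi D P \<longleftrightarrow>
     (\<forall>t\<ge>0. \<forall>x\<in>D. \<forall>y\<in>D. \<forall>p\<in>P. \<forall>q\<in>P. x \<le> y \<and> p \<le> q \<longrightarrow> phi t x p \<le> phi t y q)"

end

theory Submission
  imports Defs
begin

text \<open>Local Lipschitz continuity of the vector field gives continuous dependence on initial
  data (Gronwall), hence uniqueness, the semigroup law of the flow, and relative openness in
  \<open>D\<close> of the basin of every asymptotically stable equilibrium.
  Let \<open>p2 \<le> p1\<close>. A point in both \<open>basin p2 (xb p2)\<close> and \<open>basin p1 (xs p1)\<close> would, by
  monotonicity, force \<open>xb p2 \<le> xs p1\<close>; with A3 this gives \<open>xb pmin \<le> xs pmax\<close>,
  contradicting A4. So these basins are disjoint. By bistability every point of \<open>D\<close> outside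
  both basins at \<open>p2\<close> lies in the closure of \<open>basin p2 (xb p2)\<close>, so the relatively open set
  \<open>basin p1 (xs p1)\<close> must lie inside \<open>basin p2 (xs p2)\<close>; the inclusion for \<open>xb\<close> is
  symmetric.\<close>

definition forward_solution :: "('a::real_normed_vector \<Rightarrow> 'a) \<Rightarrow> 'a set \<Rightarrow> (real \<Rightarrow> 'a) \<Rightarrow> bool" where
  "forward_solution F D u \<longleftrightarrow>
     (\<forall>t\<ge>0. (u has_vector_derivative F (u t)) (at t within {0..}) \<and> u t \<in> D)"

lemma forward_solution_continuous_on:
  assumes "forward_solution F D u"
  shows "continuous_on {0..} u"
  using assms unfolding forward_solution_def continuous_on_eq_continuous_within
  by (auto intro: has_vector_derivative_continuous)

lemma inner_self_has_real_derivative: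
  fixes a :: "real \<Rightarrow> 'a::real_inner"
  assumes "(a has_vector_derivative a') (at s)"
  shows "((\<lambda>t. a t \<bullet> a t) has_real_derivative 2 * (a s \<bullet> a')) (at s)"
proof -
  have "((\<lambda>t. a t \<bullet> a t) has_derivative (\<lambda>h. a s \<bullet> (h *\<^sub>R a') + (h *\<^sub>R a') \<bullet> a s)) (at s)"
    using assms unfolding has_vector_derivative_def by (intro has_derivative_inner)
  moreover have "(\<lambda>h. a s \<bullet> (h *\<^sub>R a') + (h *\<^sub>R a') \<bullet> a s) = (\<lambda>h. h * (2 * (a s \<bullet> a')))"
    by (auto simp: inner_commute algebra_simps)
  ultimately show ?thesis by (simp add: has_field_derivative_def mult_commute_abs)
qed

text \<open>Gronwall's estimate, via the nonincreasing function
  \<open>exp (-2 L s) * dist (u s) (v s)\<^sup>2\<close>.\<close>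
lemma forward_solutions_dist_le_exp:
  fixes u v :: "real \<Rightarrow> 'a::real_inner"
  assumes u: "forward_solution F D u" and v: "forward_solution F D v"
    and lip: "\<And>s. 0 < s \<Longrightarrow> s < t \<Longrightarrow> dist (F (u s)) (F (v s)) \<le> L * dist (u s) (v s)"
    and L: "0 \<le> L" and t: "0 \<le> t"
  shows "dist (u t) (v t) \<le> dist (u 0) (v 0) * exp (L * t)"
proof -
  define w where "w s = (u s - v s) \<bullet> (u s - v s)" for s
  define h where "h s = exp (- (2 * L) * s) * w s" for s
  have w_dist: "w s = (dist (u s) (v s))\<^sup>2" for s
    by (simp add: w_def dist_norm power2_norm_eq_inner)
  have "continuous_on {0..t} u" "continuous_on {0..t} v"
    using forward_solution_continuous_on[OF u] forward_solution_continuous_on[OF v]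
    by (auto elim: continuous_on_subset)
  then have "continuous_on {0..t} h"
    unfolding h_def w_def by (intro continuous_intros)
  moreover have "\<exists>y. (h has_real_derivative y) (at s) \<and> y \<le> 0" if s: "0 < s" "s < t" for s
  proof -
    have "at s within {0..} = at s"
      using s by (intro at_within_interior) auto
    then have "(u has_vector_derivative F (u s)) (at s)" "(v has_vector_derivative F (v s)) (at s)"
      using u v s unfolding forward_solution_def by (metis less_imp_le)+
    then have "((\<lambda>s. u s - v s) has_vector_derivative F (u s) - F (v s)) (at s)"
      by (intro derivative_intros)
    from inner_self_has_real_derivative[OF this]
    have "(w has_real_derivative 2 * ((u s - v s) \<bullet> (F (u s) - F (v s)))) (at s)"
      unfolding w_def .
    then have dh: "(h has_real_derivative exp (- (2 * L) * s) *
        (2 * ((u s - v s) \<bullet> (F (u s) - F (v s))) - 2 * L * w s)) (at s)"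
      unfolding h_def by (auto intro!: derivative_eq_intros simp: algebra_simps)
    have "(u s - v s) \<bullet> (F (u s) - F (v s)) \<le> norm (u s - v s) * norm (F (u s) - F (v s))"
      by (rule norm_cauchy_schwarz)
    also have "\<dots> \<le> dist (u s) (v s) * (L * dist (u s) (v s))"
      using lip[OF s] by (simp add: dist_norm mult_left_mono)
    also have "\<dots> = L * w s"
      by (simp add: w_dist power2_eq_square)
    finally show ?thesis
      using dh by (intro exI[of _ _] conjI) (auto intro!: mult_nonneg_nonpos)
  qed
  ultimately have "h t \<le> h 0"
    by (intro DERIV_nonpos_imp_decreasing_open[OF t]) auto
  then have "exp (- (2 * L) * t) * (dist (u t) (v t))\<^sup>2 \<le> (dist (u 0) (v 0))\<^sup>2"
    by (simp add: h_def w_dist)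
  then have "(dist (u t) (v t))\<^sup>2 \<le> (dist (u 0) (v 0) * exp (L * t))\<^sup>2"
    by (simp add: power_mult_distrib exp_minus field_simps flip: exp_of_nat_mult)
  then show ?thesis
    by (rule power2_le_imp_le) simp
qed

text \<open>First-exit argument: at the first time the distance reaches \<open>r\<close>, the Lipschitz
  bound has held so far, so Gronwall's estimate keeps the distance below \<open>r\<close>.\<close>
lemma forward_solutions_stay_close:
  fixes u v :: "real \<Rightarrow> 'a::real_inner"
  assumes u: "forward_solution F D u" and v: "forward_solution F D v"
    and lip: "\<And>t. 0 \<le> t \<Longrightarrow> t \<le> T \<Longrightarrow> dist (u t) (v t) \<le> r \<Longrightarrow>
               dist (F (u t)) (F (v t)) \<le> L * dist (u t) (v t)"
    and L: "0 \<le> L" and small: "dist (u 0) (v 0) * exp (L * T) < r"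
  shows "\<forall>t\<in>{0..T}. dist (u t) (v t) < r"
proof (rule ccontr)
  define S where "S = {0..T} \<inter> (\<lambda>t. dist (u t) (v t)) -` {r..}"
  assume "\<not> (\<forall>t\<in>{0..T}. dist (u t) (v t) < r)"
  then have "S \<noteq> {}"
    by (auto simp: S_def not_less)
  moreover have "bdd_below S"
    by (auto simp: S_def bdd_below_def)
  moreover have "closed S"
    unfolding S_def using forward_solution_continuous_on[OF u] forward_solution_continuous_on[OF v]
    by (intro continuous_closed_preimage continuous_intros) (auto elim: continuous_on_subset)
  ultimately have "Inf S \<in> S"
    by (rule closed_contains_Inf)
  define t1 where "t1 = Inf S"
  have t1: "r \<le> dist (u t1) (v t1)" "0 \<le> t1" "t1 \<le> T"
    using \<open>Inf S \<in> S\<close> by (auto simp: S_def t1_def)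
  have before_t1: "dist (u s) (v s) < r" if "0 \<le> s" "s < t1" for s
    using that t1 cInf_lower[OF _ \<open>bdd_below S\<close>, of s] by (force simp: S_def t1_def)
  have "dist (u t1) (v t1) \<le> dist (u 0) (v 0) * exp (L * t1)"
    using t1 by (intro forward_solutions_dist_le_exp[OF u v lip L])
      (auto dest!: before_t1[OF less_imp_le] simp: less_imp_le)
  also have "\<dots> \<le> dist (u 0) (v 0) * exp (L * T)"
    using t1 L by (intro mult_left_mono) (auto simp: mult_left_mono)
  finally show False
    using small t1 by linarith
qed

text \<open>Cover \<open>K\<close> by finitely many balls of half the local Lipschitz radii.\<close>
lemma locally_lipschitz_near_compact:
  assumes LL: "\<forall>x\<in>D. \<exists>r>0. \<exists>L. L-lipschitz_on (cball x r \<inter> D) F"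
    and K: "compact K" "K \<subseteq> D" "K \<noteq> {}"
  obtains r L where "r > 0" "0 \<le> L"
    "\<And>a b. a \<in> K \<Longrightarrow> b \<in> D \<Longrightarrow> dist a b \<le> r \<Longrightarrow> dist (F a) (F b) \<le> L * dist a b"
proof -
  from LL obtain R LR where RL: "\<And>x. x \<in> D \<Longrightarrow> R x > 0 \<and> (LR x)-lipschitz_on (cball x (R x) \<inter> D) F"
    by metis
  have cover: "K \<subseteq> (\<Union>x\<in>K. ball x (R x / 2))"
    using RL K(2) by force
  obtain C where C: "C \<subseteq> K" "finite C" "K \<subseteq> (\<Union>c\<in>C. ball c (R c / 2))"
    using compactE_image[OF K(1) _ cover] by blast
  then obtain c0 where "c0 \<in> C"
    using K(3) by auto
  define r where "r = Min ((\<lambda>c. R c / 2) ` C)"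
  define L where "L = Max (LR ` C)"
  have "r > 0"
    unfolding r_def using C \<open>c0 \<in> C\<close> RL K(2) by (subst Min_gr_iff) auto
  have "0 \<le> LR c0"
    using RL[of c0] \<open>c0 \<in> C\<close> C K(2) lipschitz_on_nonneg by blast
  also have "LR c0 \<le> L"
    unfolding L_def using C \<open>c0 \<in> C\<close> by (intro Max_ge) auto
  finally have "0 \<le> L" .
  moreover have "dist (F a) (F b) \<le> L * dist a b" if ab: "a \<in> K" "b \<in> D" "dist a b \<le> r" for a b
  proof -
    obtain c where c: "c \<in> C" "a \<in> ball c (R c / 2)"
      using C(3) ab(1) by auto
    have cD: "c \<in> D"
      using c C K(2) by auto
    have "r \<le> R c / 2"
      unfolding r_def using C c by (intro Min_le) auto
    then have "a \<in> cball c (R c) \<inter> D" "b \<in> cball c (R c) \<inter> D"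
      using c ab K(2) dist_triangle[of c b a] RL[OF cD] by (auto simp: dist_commute)
    then have "dist (F a) (F b) \<le> LR c * dist a b"
      using RL[OF cD] by (intro lipschitz_onD) auto
    also have "\<dots> \<le> L * dist a b"
      unfolding L_def using C c by (intro mult_right_mono Max_ge) auto
    finally show ?thesis .
  qed
  ultimately show ?thesis
    using \<open>r > 0\<close> that by blast
qed

lemma forward_solution_continuous_dependence:
  fixes u :: "real \<Rightarrow> 'a::euclidean_space"
  assumes LL: "\<forall>x\<in>D. \<exists>r>0. \<exists>L. L-lipschitz_on (cball x r \<inter> D) F"
    and u: "forward_solution F D u" and T: "0 \<le> T" and e: "0 < e"
  obtains \<delta> where "\<delta> > 0"
    "\<And>v t. forward_solution F D v \<Longrightarrow> dist (u 0) (v 0) < \<delta> \<Longrightarrow> t \<in> {0..T} \<Longrightarrow>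
       dist (u t) (v t) < e"
proof -
  have "continuous_on {0..T} u"
    using forward_solution_continuous_on[OF u] by (rule continuous_on_subset) auto
  then have K: "compact (u ` {0..T})" "u ` {0..T} \<subseteq> D" "u ` {0..T} \<noteq> {}"
    using compact_continuous_image u T by (auto simp: forward_solution_def)
  then obtain r L where rL: "r > 0" "0 \<le> L"
    "\<And>a b. a \<in> u ` {0..T} \<Longrightarrow> b \<in> D \<Longrightarrow> dist a b \<le> r \<Longrightarrow> dist (F a) (F b) \<le> L * dist a b"
    using locally_lipschitz_near_compact[OF LL K] by blast
  define \<delta> where "\<delta> = min r e / exp (L * T)"
  have "dist (u t) (v t) < e"
    if v: "forward_solution F D v" and d0: "dist (u 0) (v 0) < \<delta>" and t: "t \<in> {0..T}" for v t
  proof -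
    have vD: "v s \<in> D" if "0 \<le> s" for s
      using v that by (simp add: forward_solution_def)
    have small: "dist (u 0) (v 0) * exp (L * T) < min r e"
      using d0 by (simp add: \<delta>_def pos_less_divide_eq)
    have lip: "dist (F (u s)) (F (v s)) \<le> L * dist (u s) (v s)"
      if "0 \<le> s" "s \<le> T" "dist (u s) (v s) \<le> r" for s
      using rL(3) that vD by auto
    have "\<forall>s\<in>{0..T}. dist (u s) (v s) < r"
      using small by (intro forward_solutions_stay_close[OF u v lip rL(2)]) auto
    then have "dist (u s) (v s) \<le> r" if "0 \<le> s" "s \<le> T" for s
      using that by (simp add: less_imp_le)
    then have "dist (u t) (v t) \<le> dist (u 0) (v 0) * exp (L * t)"
      using t by (intro forward_solutions_dist_le_exp[OF u v _ rL(2)]) (auto intro!: lip simp: less_imp_le)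
    also have "\<dots> \<le> dist (u 0) (v 0) * exp (L * T)"
      using t rL(2) by (intro mult_left_mono) (auto simp: mult_left_mono)
    finally show ?thesis
      using small by linarith
  qed
  moreover have "\<delta> > 0"
    using rL e by (simp add: \<delta>_def)
  ultimately show ?thesis
    using that by blast
qed

lemma forward_solution_unique:
  fixes u v :: "real \<Rightarrow> 'a::euclidean_space"
  assumes "\<forall>x\<in>D. \<exists>r>0. \<exists>L. L-lipschitz_on (cball x r \<inter> D) F"
    and "forward_solution F D u" "forward_solution F D v" "u 0 = v 0" "0 \<le> t"
  shows "u t = v t"
proof -
  have "dist (u t) (v t) < e" if "0 < e" for e
    using forward_solution_continuous_dependence[OF assms(1,2,5) that] assms(3,4,5) by fastforce
  then show ?thesis
    by (metis dist_eq_0_iff dist_nz less_irrefl)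
qed

lemma openin_subset_if_closure_disjoint:
  assumes "openin (top_of_set D) U" "A \<subseteq> D" "U \<inter> A = {}"
    and "\<And>x. x \<in> U \<Longrightarrow> x \<notin> B \<Longrightarrow> x \<in> closure A"
  shows "U \<subseteq> B"
proof
  fix x assume "x \<in> U"
  obtain V where "open V" "U = D \<inter> V"
    using assms(1) by (auto simp: openin_open)
  show "x \<in> B"
  proof (rule ccontr)
    assume "x \<notin> B"
    then have "V \<inter> closure A \<noteq> {}"
      using assms(4) \<open>x \<in> U\<close> \<open>U = D \<inter> V\<close> by blast
    then have "V \<inter> A \<noteq> {}"
      using open_Int_closure_eq_empty[OF \<open>open V\<close>] by blast
    then show False
      using assms(2,3) \<open>U = D \<inter> V\<close> by blast
  qed
qed

locale ode_flow =
  fixes f :: "real^'n \<Rightarrow> real^'m \<Rightarrow> real^'n"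
    and phi :: "real \<Rightarrow> real^'n \<Rightarrow> real^'m \<Rightarrow> real^'n"
    and D :: "(real^'n) set" and P :: "(real^'m) set"
  assumes flow: "is_flow f phi D P"
    and invariant: "\<And>p. p \<in> P \<Longrightarrow> forward_invariant phi D p"
    and lipschitz: "local_lipschitz P D (\<lambda>p x. f x p)"
begin

lemma phi_zero: "x \<in> D \<Longrightarrow> p \<in> P \<Longrightarrow> phi 0 x p = x"
  using flow by (simp add: is_flow_def)

lemma trajectory_forward_solution:
  assumes "x \<in> D" "p \<in> P"
  shows "forward_solution (\<lambda>x. f x p) D (\<lambda>t. phi t x p)"
  using flow invariant[of p] assms by (simp add: is_flow_def forward_invariant_def forward_solution_def)

lemma locally_lipschitz_field:
  assumes "p \<in> P"
  shows "\<forall>x\<in>D. \<exists>r>0. \<exists>L. L-lipschitz_on (cball x r \<inter> D) (\<lambda>x. f x p)"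
proof
  fix x assume "x \<in> D"
  then obtain r L where "r > 0" "\<And>q. q \<in> cball p r \<inter> P \<Longrightarrow> L-lipschitz_on (cball x r \<inter> D) (\<lambda>x. f x q)"
    using local_lipschitzE[OF lipschitz assms] by metis
  then show "\<exists>r>0. \<exists>L. L-lipschitz_on (cball x r \<inter> D) (\<lambda>x. f x p)"
    using assms by force
qed

lemma phi_add:
  assumes p: "p \<in> P" and y: "y \<in> D" and "0 \<le> T" "0 \<le> s"
  shows "phi (s + T) y p = phi s (phi T y p) p"
proof -
  have yT: "phi T y p \<in> D"
    using invariant[OF p] y \<open>0 \<le> T\<close> by (simp add: forward_invariant_def)
  have "forward_solution (\<lambda>x. f x p) D (\<lambda>s. phi (s + T) y p)"
    unfolding forward_solution_def
  proof (intro allI impI conjI)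
    fix t :: real assume "0 \<le> t"
    have "((\<lambda>s. phi s y p) has_vector_derivative f (phi (t + T) y p) p) (at (t + T) within (\<lambda>s. s + T) ` {0..})"
    proof (rule has_vector_derivative_within_subset)
      show "((\<lambda>s. phi s y p) has_vector_derivative f (phi (t + T) y p) p) (at (t + T) within {0..})"
        using trajectory_forward_solution[OF y p] \<open>0 \<le> t\<close> \<open>0 \<le> T\<close> by (simp add: forward_solution_def)
    qed (use \<open>0 \<le> T\<close> in auto)
    then have "((\<lambda>s. phi s y p) \<circ> (\<lambda>s. s + T) has_vector_derivative 1 *\<^sub>R f (phi (t + T) y p) p)
        (at t within {0..})"
      by (intro vector_diff_chain_within) (auto intro!: derivative_eq_intros)
    then show "((\<lambda>s. phi (s + T) y p) has_vector_derivative f (phi (t + T) y p) p) (at t within {0..})"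
      by (simp add: o_def)
    show "phi (t + T) y p \<in> D"
      using trajectory_forward_solution[OF y p] \<open>0 \<le> t\<close> \<open>0 \<le> T\<close> by (simp add: forward_solution_def)
  qed
  then show ?thesis
    using forward_solution_unique[OF locally_lipschitz_field[OF p] _ trajectory_forward_solution[OF yT p]]
      phi_zero[OF yT p] \<open>0 \<le> s\<close> by simp
qed

lemma basin_if_flow_in_basin:
  assumes p: "p \<in> P" and y: "y \<in> D" and "0 \<le> T"
    and "phi T y p \<in> basin phi D p e"
  shows "y \<in> basin phi D p e"
proof -
  have "filterlim (\<lambda>t. t - T) at_top at_top"
    using filterlim_tendsto_add_at_top[OF tendsto_const filterlim_ident, of "- T"] by simp
  moreover have "((\<lambda>s. phi s (phi T y p) p) \<longlongrightarrow> e) at_top"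
    using assms(4) by (simp add: basin_def)
  ultimately have "((\<lambda>t. phi (t - T) (phi T y p) p) \<longlongrightarrow> e) at_top"
    by (rule filterlim_compose[rotated])
  moreover have "eventually (\<lambda>t. phi (t - T) (phi T y p) p = phi t y p) at_top"
    unfolding eventually_at_top_linorder
    using phi_add[OF p y \<open>0 \<le> T\<close>] by (metis diff_add_cancel diff_ge_0_iff_ge)
  ultimately have "((\<lambda>t. phi t y p) \<longlongrightarrow> e) at_top"
    by (rule Lim_transform_eventually)
  then show ?thesis
    using y by (simp add: basin_def)
qed

lemma basin_openin:
  assumes p: "p \<in> P" and stable: "asymp_stable f phi D p e"
  shows "openin (top_of_set D) (basin phi D p e)"
  unfolding openin_euclidean_subtopology_iff
proof (intro conjI ballI)
  show "basin phi D p e \<subseteq> D"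
    by (auto simp: basin_def)
next
  fix x0 assume x0: "x0 \<in> basin phi D p e"
  then have x0D: "x0 \<in> D" and "((\<lambda>t. phi t x0 p) \<longlongrightarrow> e) at_top"
    by (auto simp: basin_def)
  obtain d where "d > 0" and attract: "\<And>z. z \<in> D \<Longrightarrow> dist z e < d \<Longrightarrow> ((\<lambda>t. phi t z p) \<longlongrightarrow> e) at_top"
    using stable unfolding asymp_stable_def by blast
  then have "eventually (\<lambda>t. dist (phi t x0 p) e < d / 2) at_top"
    using \<open>((\<lambda>t. phi t x0 p) \<longlongrightarrow> e) at_top\<close> unfolding tendsto_iff by (metis half_gt_zero)
  then obtain N where N: "\<And>t. N \<le> t \<Longrightarrow> dist (phi t x0 p) e < d / 2"
    by (auto simp: eventually_at_top_linorder)
  define T where "T = max N 0"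
  have "0 \<le> T" and T: "dist (phi T x0 p) e < d / 2"
    using N by (auto simp: T_def)
  obtain \<delta> where "\<delta> > 0" and close: "\<And>v t. forward_solution (\<lambda>x. f x p) D v \<Longrightarrow>
      dist (phi 0 x0 p) (v 0) < \<delta> \<Longrightarrow> t \<in> {0..T} \<Longrightarrow> dist (phi t x0 p) (v t) < d / 2"
    using forward_solution_continuous_dependence[OF locally_lipschitz_field[OF p]
        trajectory_forward_solution[OF x0D p] \<open>0 \<le> T\<close>] \<open>d > 0\<close> by (metis half_gt_zero)
  have "y \<in> basin phi D p e" if y: "y \<in> D" "dist y x0 < \<delta>" for y
  proof -
    have "dist (phi T x0 p) (phi T y p) < d / 2"
      using close[OF trajectory_forward_solution[OF y(1) p]] phi_zero x0D y p \<open>0 \<le> T\<close>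
      by (simp add: dist_commute)
    then have "dist (phi T y p) e < d"
      using T dist_triangle[of "phi T y p" e "phi T x0 p"] by (simp add: dist_commute)
    moreover have "phi T y p \<in> D"
      using invariant[OF p] y \<open>0 \<le> T\<close> by (simp add: forward_invariant_def)
    ultimately have "phi T y p \<in> basin phi D p e"
      using attract by (simp add: basin_def)
    then show ?thesis
      by (rule basin_if_flow_in_basin[OF p y(1) \<open>0 \<le> T\<close>])
  qed
  then show "\<exists>\<delta>>0. \<forall>y\<in>D. dist y x0 < \<delta> \<longrightarrow> y \<in> basin phi D p e"
    using \<open>\<delta> > 0\<close> by blast
qed

lemma basin_subset_if_disjoint:
  assumes "p \<in> P" "asymp_stable f phi D p e"
    and "basin phi D p e \<inter> basin phi D q b = {}"
    and "\<And>x. x \<in> D \<Longrightarrow> x \<notin> basin phi D q a \<Longrightarrow> x \<notin> basin phi D q b \<Longrightarrow> x \<in> closure (basin phi D q b)"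
  shows "basin phi D p e \<subseteq> basin phi D q a"
proof (rule openin_subset_if_closure_disjoint)
  show "openin (top_of_set D) (basin phi D p e)"
    using basin_openin assms(1,2) .
  show "basin phi D q b \<subseteq> D"
    by (auto simp: basin_def)
  show "x \<in> closure (basin phi D q b)" if "x \<in> basin phi D p e" "x \<notin> basin phi D q a" for x
    using that assms(3,4) by (auto simp: basin_def)
qed (use assms(3) in blast)

end

lemma bistable_asymp_stable:
  assumes "bistable f phi D p xs xb"
  shows "asymp_stable f phi D p xs" "asymp_stable f phi D p xb"
  using assms unfolding bistable_def by (metis (mono_tags) insertCI mem_Collect_eq)+

lemma bistable_outside_basins_in_closure:
  assumes "bistable f phi D p xs xb" "x \<in> D" "x \<notin> basin phi D p xs" "x \<notin> basin phi D p xb"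
  shows "x \<in> closure (basin phi D p xs)" "x \<in> closure (basin phi D p xb)"
  using assms unfolding bistable_def frontier_def by blast+

lemma monotone_system_basin_limits_le:
  assumes "monotone_system phi D P" "p \<in> P" "q \<in> P" "p \<le> q"
    and "y \<in> basin phi D p a" "y \<in> basin phi D q b"
  shows "a \<le> b"
  unfolding less_eq_vec_def
proof
  fix i
  have "y \<in> D" and "((\<lambda>t. phi t y p $ i) \<longlongrightarrow> a $ i) at_top" "((\<lambda>t. phi t y q $ i) \<longlongrightarrow> b $ i) at_top"
    using assms(5,6) by (auto simp: basin_def intro: tendsto_vec_nth)
  moreover have "eventually (\<lambda>t. phi t y p $ i \<le> phi t y q $ i) at_top"
    using assms(1-4) \<open>y \<in> D\<close> unfolding monotone_system_def eventually_at_top_linorder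
    by (metis less_eq_vec_def order_refl)
  ultimately show "a $ i \<le> b $ i"
    by (intro tendsto_le[of at_top]) auto
qed

lemma strongly_less_imp_not_ge: "strongly_less x y \<Longrightarrow> \<not> y \<le> x"
  by (auto simp: strongly_less_def less_eq_vec_def not_le)

theorem mainTheorem4:
  fixes f :: "real^'n \<Rightarrow> real^'m \<Rightarrow> real^'n"
    and phi :: "real \<Rightarrow> real^'n \<Rightarrow> real^'m \<Rightarrow> real^'n"
    and D :: "(real^'n) set" and P :: "(real^'m) set"
    and xs xb :: "real^'m \<Rightarrow> real^'n"
    and pmin pmax :: "real^'m"
  assumes cont: "continuous_on (D \<times> P) (\<lambda>(x, p). f x p)"
    and lip: "local_lipschitz P D (\<lambda>p x. f x p)"
    and flow: "is_flow f phi D P"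
    and A1_bistable: "\<forall>p\<in>P. bistable f phi D p (xs p) (xb p)"
    and A1_monotone: "monotone_system phi D P"
    and A2_compact: "compact P"
    and A2_min: "pmin \<in> P" and A2_max: "pmax \<in> P"
    and A2_bounds: "\<forall>p\<in>P. pmin \<le> p \<and> p \<le> pmax"
    and A3: "\<forall>p\<in>P. xs p \<in> (\<Inter>q\<in>P. basin phi D q (xs q)) \<and>
                   xb p \<in> (\<Inter>q\<in>P. basin phi D q (xb q))"
    and A4: "strongly_less (xs pmax) (xb pmin)"
  shows "(\<forall>p1\<in>P. \<forall>p2\<in>P. p2 \<le> p1 \<longrightarrow>
            basin phi D p1 (xs p1) \<subseteq> basin phi D p2 (xs p2) \<and>
            basin phi D p2 (xb p2) \<subseteq> basin phi D p1 (xb p1)) \<and>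
         (\<forall>p\<in>P.
            basin phi D pmax (xs pmax) \<subseteq> basin phi D p (xs p) \<and>
            basin phi D p (xs p) \<subseteq> basin phi D pmin (xs pmin) \<and>
            basin phi D pmin (xb pmin) \<subseteq> basin phi D p (xb p) \<and>
            basin phi D p (xb p) \<subseteq> basin phi D pmax (xb pmax))"
proof -
  have bistable: "\<And>p. p \<in> P \<Longrightarrow> bistable f phi D p (xs p) (xb p)"
    using A1_bistable by blast
  interpret ode_flow f phi D P
    using flow lip bistable by unfold_locales (simp_all add: bistable_def)
  have limits_le: "a \<le> b" if "p \<in> P" "q \<in> P" "p \<le> q" "y \<in> basin phi D p a" "y \<in> basin phi D q b"
    for p q y a b
    using monotone_system_basin_limits_le[OF A1_monotone that] .
  have disjoint: "basin phi D p2 (xb p2) \<inter> basin phi D p1 (xs p1) = {}"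
    if p: "p1 \<in> P" "p2 \<in> P" "p2 \<le> p1" for p1 p2
  proof (intro equals0I)
    fix y assume "y \<in> basin phi D p2 (xb p2) \<inter> basin phi D p1 (xs p1)"
    then have "xb p2 \<le> xs p1"
      using limits_le p by blast
    moreover have "xb pmin \<le> xb p2" "xs p1 \<le> xs pmax"
      using limits_le A2_min A2_max A2_bounds A3 p by blast+
    ultimately show False
      using strongly_less_imp_not_ge[OF A4] by (meson order_trans)
  qed
  have antimono: "basin phi D p1 (xs p1) \<subseteq> basin phi D p2 (xs p2) \<and>
      basin phi D p2 (xb p2) \<subseteq> basin phi D p1 (xb p1)"
    if p: "p1 \<in> P" "p2 \<in> P" "p2 \<le> p1" for p1 p2
    using basin_subset_if_disjoint[OF p(1) bistable_asymp_stable(1)[OF bistable[OF p(1)]]]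
      basin_subset_if_disjoint[OF p(2) bistable_asymp_stable(2)[OF bistable[OF p(2)]]]
      bistable_outside_basins_in_closure[OF bistable] disjoint[OF p] p by blast
  then show ?thesis
    using A2_min A2_max A2_bounds by blast
qed

end
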